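(* Let $n\ge2$ and let $P\in\mathrm{Mat}(n^2,\mathbb{C})$ be an orthogonal projection ($P^*=P$, $P^2=P$) of rank $r$. Put $P_1=P\otimes I_n$, $P_2=I_n\otimes P$, $t_m=\operatorname{tr}_3\big((P_1P_2)^m\big)$ and $F[P]=(rn-t_1)(t_2-t_3)-(t_1-t_2)^2$. (a) If there is a real number $Q>0$ such that $Q^2(P_1P_2P_1-P_2P_1P_2)=P_1-P_2$, then $F[P]=0$. (b) If $F[P]=0$ and $P_1P_2\neq P_2P_1$, then $Q^2(P_1P_2P_1-P_2P_1P_2)=P_1-P_2$ holds with $Q>0$ given by $$Q^2=\frac{rn-t_1}{t_1-t_2}.$$
   Context: $I_n$ is the $n\times n$ identity matrix, $\otimes$ is the Kronecker product, $P^*$ is the conjugate transpose, and $\operatorname{tr}_3$ is the matrix trace on $\mathrm{Mat}(n^3,\mathbb{C})$. *)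

theory Defs
  imports "Jordan_Normal_Form.Schur_Decomposition" "Jordan_Normal_Form.DL_Rank"
begin

definition kron :: "'a::times mat \<Rightarrow> 'a mat \<Rightarrow> 'a mat" where
  "kron A B = mat (dim_row A * dim_row B) (dim_col A * dim_col B)
     (\<lambda>(i,j). A $$ (i div dim_row B, j div dim_col B) * B $$ (i mod dim_row B, j mod dim_col B))"


definition mat_trace :: "'a::comm_monoid_add mat \<Rightarrow> 'a" where
  "mat_trace A = (\<Sum>i<dim_row A. A $$ (i,i))"

end

theory Submission
  imports Defs
begin

(* Write A = P1, B = P2, X = ABA - BAB and D = A - B, so that t m = tr ((AB)^m) and, since the
   trace of an idempotent matrix is its rank, tr A = tr B = rn.
   Multiplying c X = D from the left by A and by ABA and taking traces gives
   c (t1 - t2) = tr A - t1 and c (t2 - t3) = t1 - t2, which yields (a).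
   Conversely, if c is real and satisfies both equations, then M = c X - D is Hermitian with
   tr (M^2) = 2 c^2 (t2 - t3) - 4 c (t1 - t2) + 2 (tr A - t1) = 0, hence M = 0.
   If AB and BA differ, then t1 - t2 = tr (Y* Y) for Y = BA - ABA and tr A - t1 = tr (Z* Z) for
   Z = A - BA are positive, so c = (tr A - t1) / (t1 - t2) is a positive real, and F = 0 gives
   the second equation: this is (b). *)

lemma sum_lessThan_mult_nat:
  "(\<Sum>k < b * d. f k) = (\<Sum>i < b. \<Sum>j < d. f (i * d + j :: nat) :: 'a::comm_monoid_add)"
proof (induction b)
  case (Suc b)
  have "{..<Suc b * d} = {..<b * d} \<union> {b * d..<b * d + d}" by auto
  then have "(\<Sum>k < Suc b * d. f k) = (\<Sum>k < b * d. f k) + (\<Sum>k \<in> {b * d..<b * d + d}. f k)"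
    by (simp add: sum.union_disjoint ivl_disj_int)
  also have "(\<Sum>k \<in> {b * d..<b * d + d}. f k) = (\<Sum>j < d. f (b * d + j))"
    by (rule sum.reindex_bij_witness[of _ "\<lambda>j. b * d + j" "\<lambda>k. k - b * d"]) auto
  finally show ?case using Suc by simp
qed simp

lemma mult_add_less_mult_nat:
  assumes "i < b" "j < d" shows "i * d + j < b * (d :: nat)"
proof -
  have "i * d + j < Suc i * d" using assms(2) by simp
  also have "\<dots> \<le> b * d" using assms(1) by (intro mult_le_mono1) simp
  finally show ?thesis .
qed

lemma mat_eq_blockI:
  assumes "M \<in> carrier_mat (a * c) (b * d)" "M' \<in> carrier_mat (a * c) (b * d)"
    and "\<And>i1 i2 j1 j2. i1 < a \<Longrightarrow> i2 < c \<Longrightarrow> j1 < b \<Longrightarrow> j2 < d \<Longrightarrow>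
      M $$ (i1 * c + i2, j1 * d + j2) = M' $$ (i1 * c + i2, j1 * d + j2)"
  shows "M = M'"
proof (rule eq_matI)
  fix i j assume "i < dim_row M'" "j < dim_col M'"
  then have i: "i < a * c" and j: "j < b * d" using assms(2) by auto
  then have "c > 0" "d > 0" by (auto intro: ccontr)
  then have "i div c < a" "i mod c < c" "j div d < b" "j mod d < d"
    using i j by (auto simp: less_mult_imp_div_less)
  with assms(3) have "M $$ ((i div c) * c + i mod c, (j div d) * d + j mod d) =
      M' $$ ((i div c) * c + i mod c, (j div d) * d + j mod d)" by blast
  then show "M $$ (i, j) = M' $$ (i, j)" by simp
qed (use assms in auto)

lemma dim_kron [simp]:
  "dim_row (kron A B) = dim_row A * dim_row B" "dim_col (kron A B) = dim_col A * dim_col B"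
  unfolding kron_def by simp_all

lemma kron_carrier_mat [simp]:
  "A \<in> carrier_mat a b \<Longrightarrow> B \<in> carrier_mat c d \<Longrightarrow> kron A B \<in> carrier_mat (a * c) (b * d)"
  unfolding kron_def by auto

lemma index_kron:
  assumes "A \<in> carrier_mat a b" "B \<in> carrier_mat c d"
    and "i1 < a" "i2 < c" "j1 < b" "j2 < d"
  shows "kron A B $$ (i1 * c + i2, j1 * d + j2) = A $$ (i1, j1) * B $$ (i2, j2)"
  using assms mult_add_less_mult_nat[of i1 a i2 c] mult_add_less_mult_nat[of j1 b j2 d]
  by (simp add: kron_def)

lemma kron_mult:
  fixes A C :: "'a::comm_semiring_0 mat"
  assumes A: "A \<in> carrier_mat a b" and B: "B \<in> carrier_mat c d"
    and C: "C \<in> carrier_mat b e" and D: "D \<in> carrier_mat d f"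
  shows "kron A B * kron C D = kron (A * C) (B * D)"
proof (rule mat_eq_blockI)
  fix i1 i2 j1 j2 assume i: "i1 < a" "i2 < c" and j: "j1 < e" "j2 < f"
  have "(kron A B * kron C D) $$ (i1 * c + i2, j1 * f + j2) =
      (\<Sum>k < b * d. kron A B $$ (i1 * c + i2, k) * kron C D $$ (k, j1 * f + j2))"
    using assms i j mult_add_less_mult_nat
    by (simp add: scalar_prod_def lessThan_atLeast0)
  also have "\<dots> = (\<Sum>k1 < b. \<Sum>k2 < d.
      kron A B $$ (i1 * c + i2, k1 * d + k2) * kron C D $$ (k1 * d + k2, j1 * f + j2))"
    by (rule sum_lessThan_mult_nat)
  also have "\<dots> = (\<Sum>k1 < b. \<Sum>k2 < d. (A $$ (i1, k1) * C $$ (k1, j1)) * (B $$ (i2, k2) * D $$ (k2, j2)))"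
    using assms i j by (intro sum.cong refl) (simp add: index_kron, simp add: ac_simps)
  also have "\<dots> = (A * C) $$ (i1, j1) * (B * D) $$ (i2, j2)"
    using assms i j by (simp add: sum_product scalar_prod_def lessThan_atLeast0)
  also have "\<dots> = kron (A * C) (B * D) $$ (i1 * c + i2, j1 * f + j2)"
    using i j by (simp add: index_kron[OF mult_carrier_mat[OF A C] mult_carrier_mat[OF B D]])
  finally show "(kron A B * kron C D) $$ (i1 * c + i2, j1 * f + j2) =
      kron (A * C) (B * D) $$ (i1 * c + i2, j1 * f + j2)" .
qed (use assms in auto)

lemma mat_trace_kron:
  fixes A :: "'a::comm_semiring_0 mat"
  assumes "A \<in> carrier_mat a a" "B \<in> carrier_mat c c"
  shows "mat_trace (kron A B) = mat_trace A * mat_trace B"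
  using assms by (simp add: mat_trace_def sum_lessThan_mult_nat index_kron sum_product)

lemma mat_trace_one [simp]: "mat_trace (1\<^sub>m n :: 'a::semiring_1 mat) = of_nat n"
  by (simp add: mat_trace_def)

lemma mat_trace_mult_comm:
  fixes A :: "'a::comm_semiring_0 mat"
  assumes "A \<in> carrier_mat m k" "B \<in> carrier_mat k m"
  shows "mat_trace (A * B) = mat_trace (B * A)"
proof -
  have "mat_trace (A * B) = (\<Sum>i<m. \<Sum>j<k. A $$ (i, j) * B $$ (j, i))"
    using assms by (simp add: mat_trace_def scalar_prod_def lessThan_atLeast0)
  also have "\<dots> = (\<Sum>j<k. \<Sum>i<m. B $$ (j, i) * A $$ (i, j))"
    by (subst sum.swap) (simp add: mult.commute)
  also have "\<dots> = mat_trace (B * A)"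
    using assms by (simp add: mat_trace_def scalar_prod_def lessThan_atLeast0)
  finally show ?thesis .
qed

lemma mat_trace_minus:
  fixes A :: "'a::ab_group_add mat"
  shows "A \<in> carrier_mat m m \<Longrightarrow> B \<in> carrier_mat m m \<Longrightarrow> mat_trace (A - B) = mat_trace A - mat_trace B"
  by (simp add: mat_trace_def sum_subtractf)

lemma mat_trace_smult:
  fixes A :: "'a::semiring_0 mat"
  shows "A \<in> carrier_mat m m \<Longrightarrow> mat_trace (c \<cdot>\<^sub>m A) = c * mat_trace A"
  by (simp add: mat_trace_def sum_distrib_left)

lemma conjugate_one [simp]: "conjugate (1 :: 'a::conjugatable_field) = 1"
proof -
  have "conjugate 1 * conjugate 1 = conjugate (1 * 1 :: 'a)"
    by (rule conjugate_dist_mul[symmetric])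
  then have "conjugate 1 * conjugate 1 = conjugate 1 * (1 :: 'a)" by simp
  then show ?thesis by simp
qed

lemma conjugate_diff: "conjugate (a - b :: 'a::conjugatable_ring) = conjugate a - conjugate b"
  by (simp only: diff_conv_add_uminus conjugate_dist_add conjugate_neg)

lemma dim_mat_adjoint [simp]:
  "dim_row (mat_adjoint A) = dim_col A" "dim_col (mat_adjoint A) = dim_row A"
  by (simp_all add: mat_adjoint_def)

lemma index_mat_adjoint [simp]:
  "i < dim_col A \<Longrightarrow> j < dim_row A \<Longrightarrow> mat_adjoint A $$ (i, j) = conjugate (A $$ (j, i))"
  by (simp add: mat_adjoint_def mat_of_rows_index)

lemma mat_adjoint_carrier_mat [simp]: "A \<in> carrier_mat m p \<Longrightarrow> mat_adjoint A \<in> carrier_mat p m"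
  by auto

lemma mat_adjoint_mult:
  fixes A :: "'a::conjugatable_field mat"
  assumes "A \<in> carrier_mat m k" "B \<in> carrier_mat k p"
  shows "mat_adjoint (A * B) = mat_adjoint B * mat_adjoint A"
  using assms by (intro eq_matI)
    (auto simp: scalar_prod_def sum_conjugate conjugate_dist_mul mult.commute)

lemma mat_adjoint_minus:
  fixes A :: "'a::conjugatable_field mat"
  assumes "A \<in> carrier_mat m p" "B \<in> carrier_mat m p"
  shows "mat_adjoint (A - B) = mat_adjoint A - mat_adjoint B"
  using assms by (intro eq_matI) (auto simp: conjugate_diff)

lemma mat_adjoint_smult:
  fixes A :: "'a::conjugatable_field mat"
  shows "mat_adjoint (c \<cdot>\<^sub>m A) = conjugate c \<cdot>\<^sub>m mat_adjoint A"
  by (intro eq_matI) (auto simp: conjugate_dist_mul)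

lemma mat_adjoint_one [simp]: "mat_adjoint (1\<^sub>m n :: 'a::conjugatable_field mat) = 1\<^sub>m n"
  by (intro eq_matI) auto

lemma mat_adjoint_kron:
  fixes A :: "'a::conjugatable_field mat"
  assumes A: "A \<in> carrier_mat a b" and B: "B \<in> carrier_mat c d"
  shows "mat_adjoint (kron A B) = kron (mat_adjoint A) (mat_adjoint B)"
proof (rule mat_eq_blockI)
  fix i1 i2 j1 j2 assume ij: "i1 < b" "i2 < d" "j1 < a" "j2 < c"
  then have "i1 * d + i2 < b * d" "j1 * c + j2 < a * c"
    by (simp_all add: mult_add_less_mult_nat)
  with ij show "mat_adjoint (kron A B) $$ (i1 * d + i2, j1 * c + j2) =
      kron (mat_adjoint A) (mat_adjoint B) $$ (i1 * d + i2, j1 * c + j2)"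
    using A B by (simp add: index_kron[OF A B] index_kron[OF mat_adjoint_carrier_mat[OF A]
        mat_adjoint_carrier_mat[OF B]] conjugate_dist_mul)
qed (use assms in auto)

lemma mat_trace_adjoint_mult_self:
  "Y \<in> carrier_mat m p \<Longrightarrow>
    mat_trace (mat_adjoint Y * Y) = (\<Sum>i<p. \<Sum>j<m. conjugate (Y $$ (j, i)) * Y $$ (j, i))"
  by (simp add: mat_trace_def scalar_prod_def lessThan_atLeast0)

lemma conjugate_mult_self_nonneg: "0 \<le> conjugate x * (x :: 'a::conjugatable_ordered_field)"
  by (metis conjugate_square_positive mult.commute)

lemma mat_trace_adjoint_mult_self_eq_0_iff:
  fixes Y :: "'a::conjugatable_ordered_field mat"
  assumes "Y \<in> carrier_mat m p"
  shows "mat_trace (mat_adjoint Y * Y) = 0 \<longleftrightarrow> Y = 0\<^sub>m m p"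
proof -
  have "mat_trace (mat_adjoint Y * Y) = 0 \<longleftrightarrow> (\<forall>i<p. \<forall>j<m. Y $$ (j, i) = 0)"
    unfolding mat_trace_adjoint_mult_self[OF assms]
    by (auto simp: sum_nonneg_eq_0_iff sum_nonneg conjugate_mult_self_nonneg)
  also have "\<dots> \<longleftrightarrow> Y = 0\<^sub>m m p"
    using assms by (auto simp: mat_eq_iff)
  finally show ?thesis .
qed

lemma mat_trace_adjoint_mult_self_pos:
  fixes Y :: "'a::conjugatable_ordered_field mat"
  assumes "Y \<in> carrier_mat m p" "Y \<noteq> 0\<^sub>m m p"
  shows "0 < mat_trace (mat_adjoint Y * Y)"
proof -
  have "0 \<le> mat_trace (mat_adjoint Y * Y)"
    unfolding mat_trace_adjoint_mult_self[OF assms(1)]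
    by (intro sum_nonneg conjugate_mult_self_nonneg)
  then show ?thesis
    using mat_trace_adjoint_mult_self_eq_0_iff[OF assms(1)] assms(2) by (simp add: order_less_le)
qed

context vec_space
begin

lemma maximal_indpt_subset_spans:
  assumes T: "T \<subseteq> carrier_vec n" and max: "maximal S (\<lambda>U. U \<subseteq> T \<and> lin_indpt U)"
  shows "T \<subseteq> span S"
proof
  fix v assume v: "v \<in> T"
  have ST: "S \<subseteq> T" and S: "S \<subseteq> carrier_vec n" and indpt: "lin_indpt S"
    using max T unfolding maximal_def by auto
  show "v \<in> span S"
  proof (cases "v \<in> S")
    case True
    then show ?thesis using span_mem[OF S] by simp
  next
    case False
    then have "\<not> lin_indpt (S \<union> {v})"
      using max v ST unfolding maximal_def by blast
    then show ?thesis using lin_dep_iff_in_span[OF S indpt _ False] v T by auto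
  qed
qed

lemma lin_indpt_cols_mult_cancel:
  assumes C: "C \<in> carrier_mat n k" and dist: "distinct (cols C)" and indpt: "lin_indpt (set (cols C))"
    and X: "X \<in> carrier_mat k p" and Y: "Y \<in> carrier_mat k p" and eq: "C * X = C * Y"
  shows "X = Y"
proof (rule mat_col_eqI)
  fix j assume "j < dim_col Y"
  then have j: "j < p" using Y by simp
  have "C *\<^sub>v (col X j - col Y j) = col (C * X) j - col (C * Y) j"
    unfolding col_mult2[OF C X j] col_mult2[OF C Y j]
    by (rule mult_minus_distrib_mat_vec[OF C]) (use X Y j in auto)
  then have Cv: "C *\<^sub>v (col X j - col Y j) = 0\<^sub>v n"
    unfolding eq using C Y j by simp
  have v: "col X j - col Y j \<in> carrier_vec k" using X Y j by simp
  have "col X j - col Y j = 0\<^sub>v k"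
  proof (rule ccontr)
    assume "col X j - col Y j \<noteq> 0\<^sub>v k"
    from lin_depI[OF C v this Cv dist] indpt show False by simp
  qed
  then show "col X j = col Y j"
    using X Y j by (auto simp: vec_eq_iff)
qed (use X Y in auto)

lemma cols_in_span_factor:
  assumes C: "C \<in> carrier_mat n k" and dist: "distinct (cols C)"
    and P: "P \<in> carrier_mat n m" and span: "set (cols P) \<subseteq> span (set (cols C))"
  obtains X where "X \<in> carrier_mat k m" "P = C * X"
proof -
  have "\<exists>x \<in> carrier_vec k. C *\<^sub>v x = col P l" if l: "l < m" for l
  proof -
    have "col P l \<in> span (set (cols C))"
      using span P l by (auto simp: cols_def)
    then obtain a where "lincomb a (set (cols C)) = col P l"
      using finite_in_span[of "set (cols C)"] C cols_dim by blast
    then show ?thesis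
      using mat_mult_eq_lincomb[OF C dist] by (intro bexI[of _ "vec k (\<lambda>i. a (col C i))"]) auto
  qed
  then obtain x where x: "\<And>l. l < m \<Longrightarrow> x l \<in> carrier_vec k \<and> C *\<^sub>v x l = col P l"
    by metis
  define X where "X = mat k m (\<lambda>(i, l). x l $ i)"
  have X: "X \<in> carrier_mat k m" unfolding X_def by simp
  have "P = C * X"
  proof (rule mat_col_eqI)
    fix l assume "l < dim_col (C * X)"
    then have l: "l < m" using X by simp
    have "col X l = x l" using x[OF l] l unfolding X_def by auto
    then show "col P l = col (C * X) l"
      unfolding col_mult2[OF C X l] using x[OF l] by (simp only:)
  qed (use C P X in auto)
  with X show thesis by (rule that)
qed

lemma idempotent_fixes_cols:
  assumes P: "P \<in> carrier_mat n n" and idem: "P * P = P"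
    and C: "C \<in> carrier_mat n k" and cols: "set (cols C) \<subseteq> set (cols P)"
  shows "P * C = C"
proof (rule mat_col_eqI)
  fix i assume "i < dim_col C"
  then have i: "i < k" using C by simp
  then have "col C i \<in> set (cols P)"
    using cols C by (auto simp: cols_def)
  then obtain l where l: "l < n" and "col C i = col P l"
    using P by (auto simp: cols_def)
  then have "col (P * C) i = col (P * P) l"
    using P C i by simp
  then show "col (P * C) i = col C i"
    using idem \<open>col C i = col P l\<close> by simp
qed (use P C in auto)

(* A maximal independent set of columns of P gives P = C X with C injective; as P fixes its own
   columns, C X C = C, hence X C = 1 and tr P = tr (X C) = rank P. *)
lemma idempotent_rank_eq_trace:
  assumes P: "P \<in> carrier_mat n n" and idem: "P * P = P"
  shows "of_nat (rank P) = mat_trace P"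
proof -
  have "lin_indpt {}"
    by (rule finite_lin_indpt2) auto
  then obtain S where "finite S" and max: "maximal S (\<lambda>T. T \<subseteq> set (cols P) \<and> lin_indpt T)"
    using maximal_exists_superset[of "set (cols P)" "\<lambda>T. T \<subseteq> set (cols P) \<and> lin_indpt T" "{}"]
    by blast
  then obtain ws where dist: "distinct ws" and S: "set ws = S"
    using finite_distinct_list by blast
  define C where "C = mat_of_cols n ws"
  define k where "k = length ws"
  have rank: "rank P = k"
    using rank_card_indpt[OF P max] S distinct_card[OF dist] unfolding k_def by simp
  have ws: "set ws \<subseteq> set (cols P)" "lin_indpt (set ws)"
    using max S unfolding maximal_def by auto
  have cols_P: "set (cols P) \<subseteq> carrier_vec n"
    using cols_dim[of P] P by simp
  with ws have "set ws \<subseteq> carrier_vec n" by blast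
  then have C: "C \<in> carrier_mat n k" and cols_C: "cols C = ws"
    unfolding C_def k_def by auto
  obtain X where X: "X \<in> carrier_mat k n" and PCX: "P = C * X"
    using cols_in_span_factor[OF C _ P] maximal_indpt_subset_spans[OF cols_P max]
      cols_C dist S by auto
  have CXC: "C * (X * C) = C * 1\<^sub>m k"
    using idempotent_fixes_cols[OF P idem C] PCX C X ws cols_C by simp
  have "X * C = 1\<^sub>m k"
    by (rule lin_indpt_cols_mult_cancel[OF C _ _ _ _ CXC]) (use cols_C dist ws X C in auto)
  then have "mat_trace P = of_nat k"
    using PCX mat_trace_mult_comm[OF C X] by simp
  then show ?thesis using rank by simp
qed

end

lemma minus_mat_eq_0_iff:
  fixes A :: "'a::ab_group_add mat"
  shows "A \<in> carrier_mat m p \<Longrightarrow> B \<in> carrier_mat m p \<Longrightarrow> A - B = 0\<^sub>m m p \<longleftrightarrow> A = B"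
  by (auto simp: mat_eq_iff)

locale idempotent_pair =
  fixes N :: nat and A B :: "'a::comm_ring_1 mat"
  assumes A_carrier [simp]: "A \<in> carrier_mat N N" and B_carrier [simp]: "B \<in> carrier_mat N N"
    and A_idem [simp]: "A * A = A" and B_idem [simp]: "B * B = B"
begin

definition t :: "nat \<Rightarrow> 'a" where "t k = mat_trace ((A * B) ^\<^sub>m k)"

(* Copies of library rules with every dimension fixed to N: in the library versions the inner
   dimension is a variable of the premises only, which the simplifier cannot instantiate. *)
lemma carrier_closed [simp]:
  fixes X Y :: "'a mat"
  shows "X \<in> carrier_mat N N \<Longrightarrow> Y \<in> carrier_mat N N \<Longrightarrow> X * Y \<in> carrier_mat N N"
    and "Y \<in> carrier_mat N N \<Longrightarrow> X - Y \<in> carrier_mat N N"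
  by (auto intro: minus_carrier_mat)

lemma mult_assoc_carrier [simp]:
  fixes X Y Z :: "'a mat"
  shows "X \<in> carrier_mat N N \<Longrightarrow> Y \<in> carrier_mat N N \<Longrightarrow> Z \<in> carrier_mat N N \<Longrightarrow>
    X * Y * Z = X * (Y * Z)"
  by (rule assoc_mult_mat)

lemma mult_distrib_carrier [simp]:
  fixes X Y Z :: "'a mat"
  shows "X \<in> carrier_mat N N \<Longrightarrow> Y \<in> carrier_mat N N \<Longrightarrow> Z \<in> carrier_mat N N \<Longrightarrow>
      X * (Y - Z) = X * Y - X * Z"
    and "X \<in> carrier_mat N N \<Longrightarrow> Y \<in> carrier_mat N N \<Longrightarrow> Z \<in> carrier_mat N N \<Longrightarrow>
      (X - Y) * Z = X * Z - Y * Z"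
    and "X \<in> carrier_mat N N \<Longrightarrow> Y \<in> carrier_mat N N \<Longrightarrow> X * (c \<cdot>\<^sub>m Y) = c \<cdot>\<^sub>m (X * Y)"
    and "X \<in> carrier_mat N N \<Longrightarrow> Y \<in> carrier_mat N N \<Longrightarrow> (c \<cdot>\<^sub>m X) * Y = c \<cdot>\<^sub>m (X * Y)"
  by (rule mult_minus_distrib_mat minus_mult_distrib_mat mult_smult_distrib mult_smult_assoc_mat;
      assumption)+

lemma trace_simps [simp]:
  fixes X Y :: "'a mat"
  shows "X \<in> carrier_mat N N \<Longrightarrow> Y \<in> carrier_mat N N \<Longrightarrow>
      mat_trace (X - Y) = mat_trace X - mat_trace Y"
    and "X \<in> carrier_mat N N \<Longrightarrow> mat_trace (c \<cdot>\<^sub>m X) = c * mat_trace X"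
  by (rule mat_trace_minus mat_trace_smult; assumption)+

lemma idempotent_mult_left [simp]:
  fixes X :: "'a mat"
  shows "X \<in> carrier_mat N N \<Longrightarrow> A * (A * X) = A * X"
    and "X \<in> carrier_mat N N \<Longrightarrow> B * (B * X) = B * X"
  by (metis mult_assoc_carrier A_carrier A_idem, metis mult_assoc_carrier B_carrier B_idem)

lemma trace_words [simp]:
  "mat_trace (A * B) = t 1" "mat_trace (B * A) = t 1"
  "mat_trace (A * (B * A)) = t 1" "mat_trace (B * (A * B)) = t 1"
  "mat_trace (A * (B * (A * B))) = t 2" "mat_trace (B * (A * (B * A))) = t 2"
  "mat_trace (A * (B * (A * (B * A)))) = t 2" "mat_trace (B * (A * (B * (A * B)))) = t 2"
  "mat_trace (A * (B * (A * (B * (A * B))))) = t 3" "mat_trace (B * (A * (B * (A * (B * A))))) = t 3"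
proof -
  have cyc: "mat_trace (X * Y) = mat_trace (Y * X)"
    if "X \<in> carrier_mat N N" "Y \<in> carrier_mat N N" for X Y :: "'a mat"
    using that by (rule mat_trace_mult_comm)
  show AB: "mat_trace (A * B) = t 1" and ABAB: "mat_trace (A * (B * (A * B))) = t 2"
    and ABABAB: "mat_trace (A * (B * (A * (B * (A * B))))) = t 3"
    by (simp_all add: t_def numeral_3_eq_3 numeral_2_eq_2)
  show BA: "mat_trace (B * A) = t 1"
    using cyc[of B A] AB by simp
  show "mat_trace (A * (B * A)) = t 1"
    using cyc[of A "B * A"] BA by simp
  show "mat_trace (B * (A * B)) = t 1"
    using cyc[of B "A * B"] AB by simp
  show BABA: "mat_trace (B * (A * (B * A))) = t 2"
    using cyc[of B "A * (B * A)"] ABAB by simp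
  show "mat_trace (A * (B * (A * (B * A)))) = t 2"
    using cyc[of A "B * (A * (B * A))"] BABA by simp
  show "mat_trace (B * (A * (B * (A * B)))) = t 2"
    using cyc[of B "A * (B * (A * B))"] ABAB by simp
  show "mat_trace (B * (A * (B * (A * (B * A))))) = t 3"
    using cyc[of B "A * (B * (A * (B * A)))"] ABABAB by simp
qed

lemma trace_equations_of_relation:
  assumes rel: "c \<cdot>\<^sub>m (A * B * A - B * A * B) = A - B"
  shows "c * (t 1 - t 2) = mat_trace A - t 1" and "c * (t 2 - t 3) = t 1 - t 2"
proof -
  have "mat_trace (A * (c \<cdot>\<^sub>m (A * B * A - B * A * B))) = mat_trace (A * (A - B))"
    by (simp only: rel)
  then show "c * (t 1 - t 2) = mat_trace A - t 1" by simp
  have "mat_trace (A * B * A * (c \<cdot>\<^sub>m (A * B * A - B * A * B))) = mat_trace (A * B * A * (A - B))"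
    by (simp only: rel)
  then show "c * (t 2 - t 3) = t 1 - t 2" by simp
qed

lemma trace_identity_of_relation:
  assumes "c \<cdot>\<^sub>m (A * B * A - B * A * B) = A - B"
  shows "(mat_trace A - t 1) * (t 2 - t 3) = (t 1 - t 2)\<^sup>2"
proof -
  note eqs = trace_equations_of_relation[OF assms]
  have "(mat_trace A - t 1) * (t 2 - t 3) = c * (t 1 - t 2) * (t 2 - t 3)"
    by (simp only: eqs(1))
  also have "\<dots> = (t 1 - t 2) * (c * (t 2 - t 3))"
    by (simp only: ac_simps)
  also have "\<dots> = (t 1 - t 2)\<^sup>2"
    by (simp only: eqs(2) power2_eq_square)
  finally show ?thesis .
qed

end

locale orthogonal_projection_pair = idempotent_pair N A B
  for N and A B :: "'a::conjugatable_ordered_field mat" +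
  assumes A_adjoint [simp]: "mat_adjoint A = A" and B_adjoint [simp]: "mat_adjoint B = B"
begin

lemma adjoint_simps [simp]:
  "X \<in> carrier_mat N N \<Longrightarrow> Y \<in> carrier_mat N N \<Longrightarrow> mat_adjoint (X * Y) = mat_adjoint Y * mat_adjoint X"
  "X \<in> carrier_mat N N \<Longrightarrow> Y \<in> carrier_mat N N \<Longrightarrow> mat_adjoint (X - Y) = mat_adjoint X - mat_adjoint Y"
  by (simp_all add: mat_adjoint_mult mat_adjoint_minus)

lemma t_1_minus_t_2_pos:
  assumes "A * B \<noteq> B * A" shows "0 < t 1 - t 2"
proof -
  define X where "X = B * A - A * B * A"
  have X: "X \<in> carrier_mat N N" unfolding X_def by simp
  have "X \<noteq> 0\<^sub>m N N"
  proof
    assume "X = 0\<^sub>m N N"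
    then have BA: "B * A = A * B * A"
      unfolding X_def by (simp add: minus_mat_eq_0_iff)
    then have "mat_adjoint (B * A) = mat_adjoint (A * B * A)" by simp
    then have "A * B = A * B * A" by simp
    with BA assms show False by simp
  qed
  with mat_trace_adjoint_mult_self_pos[OF X] show ?thesis
    unfolding X_def by simp
qed

lemma trace_minus_t_1_pos:
  assumes "A * B \<noteq> B * A" shows "0 < mat_trace A - t 1"
proof -
  define X where "X = A - B * A"
  have X: "X \<in> carrier_mat N N" unfolding X_def by simp
  have "X \<noteq> 0\<^sub>m N N"
  proof
    assume "X = 0\<^sub>m N N"
    then have BA: "A = B * A"
      unfolding X_def by (simp add: minus_mat_eq_0_iff)
    then have "mat_adjoint A = mat_adjoint (B * A)" by simp
    then have "A = A * B" by simp
    with BA assms show False by simp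
  qed
  with mat_trace_adjoint_mult_self_pos[OF X] show ?thesis
    unfolding X_def by simp
qed

lemma relation_of_trace_equations:
  assumes real: "conjugate c = c" and trace_B: "mat_trace B = mat_trace A"
    and eq1: "c * (t 1 - t 2) = mat_trace A - t 1" and eq2: "c * (t 2 - t 3) = t 1 - t 2"
  shows "c \<cdot>\<^sub>m (A * B * A - B * A * B) = A - B"
proof -
  define X where "X = A * B * A - B * A * B"
  define D where "D = A - B"
  define M where "M = c \<cdot>\<^sub>m X - D"
  have X: "X \<in> carrier_mat N N" and D: "D \<in> carrier_mat N N" and M: "M \<in> carrier_mat N N"
    unfolding X_def D_def M_def by simp_all
  have XX: "mat_trace (X * X) = 2 * (t 2 - t 3)"
    unfolding X_def by simp
  have XD: "mat_trace (X * D) = 2 * (t 1 - t 2)" and DX: "mat_trace (D * X) = 2 * (t 1 - t 2)"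
    unfolding X_def D_def by simp_all
  have DD: "mat_trace (D * D) = 2 * (mat_trace A - t 1)"
    unfolding D_def using trace_B by simp
  have "mat_adjoint M = M"
    unfolding M_def X_def D_def using real by (simp add: mat_adjoint_smult)
  then have "mat_trace (mat_adjoint M * M) = mat_trace (M * M)" by simp
  also have "\<dots> = c * (c * mat_trace (X * X)) - c * mat_trace (X * D) - c * mat_trace (D * X)
      + mat_trace (D * D)"
    unfolding M_def using X D by (simp add: right_diff_distrib)
  also have "\<dots> = 2 * (c * (c * (t 2 - t 3))) - 4 * (c * (t 1 - t 2)) + 2 * (mat_trace A - t 1)"
    unfolding XX XD DX DD by (simp add: algebra_simps)
  also have "\<dots> = 0"
    unfolding eq2 eq1 by (simp add: algebra_simps)
  finally have "M = 0\<^sub>m N N"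
    using mat_trace_adjoint_mult_self_eq_0_iff[OF M] by simp
  then show ?thesis
    unfolding M_def X_def D_def by (simp add: minus_mat_eq_0_iff)
qed

lemma relation_of_trace_identity:
  assumes "conjugate c = c" "mat_trace B = mat_trace A" "t 1 \<noteq> t 2"
    and c: "c = (mat_trace A - t 1) / (t 1 - t 2)"
    and identity: "(mat_trace A - t 1) * (t 2 - t 3) = (t 1 - t 2)\<^sup>2"
  shows "c \<cdot>\<^sub>m (A * B * A - B * A * B) = A - B"
proof (rule relation_of_trace_equations)
  show eq1: "c * (t 1 - t 2) = mat_trace A - t 1"
    unfolding c using \<open>t 1 \<noteq> t 2\<close> by simp
  have "c * (t 2 - t 3) * (t 1 - t 2) = c * (t 1 - t 2) * (t 2 - t 3)"
    by (simp only: ac_simps)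
  also have "\<dots> = (t 1 - t 2) * (t 1 - t 2)"
    by (simp only: eq1 identity power2_eq_square)
  finally show "c * (t 2 - t 3) = t 1 - t 2"
    using \<open>t 1 \<noteq> t 2\<close> by simp
qed (use assms in auto)

end

lemma complex_div_pos_eq_real_square:
  fixes x y :: complex
  assumes "0 < x" "0 < y"
  shows "\<exists>Q > 0. complex_of_real (Q\<^sup>2) = x / y"
proof -
  have "x = complex_of_real (Re x)" "y = complex_of_real (Re y)" and "0 < Re x" "0 < Re y"
    using assms by (auto simp: less_complex_def complex_eq_iff)
  then show ?thesis
    by (intro exI[of _ "sqrt (Re x / Re y)"]) (simp add: of_real_divide[symmetric])
qed

locale complex_projection_pair = orthogonal_projection_pair N A B for N and A B :: "complex mat"
begin

lemma positive_relation_of_trace_identity: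
  assumes trace_B: "mat_trace B = mat_trace A"
    and identity: "(mat_trace A - t 1) * (t 2 - t 3) = (t 1 - t 2)\<^sup>2"
    and noncomm: "A * B \<noteq> B * A"
  shows "\<exists>Q::real. Q > 0 \<and> complex_of_real (Q\<^sup>2) = (mat_trace A - t 1) / (t 1 - t 2) \<and>
    complex_of_real (Q\<^sup>2) \<cdot>\<^sub>m (A * B * A - B * A * B) = A - B"
proof -
  obtain Q where "Q > 0" and Q: "complex_of_real (Q\<^sup>2) = (mat_trace A - t 1) / (t 1 - t 2)"
    using complex_div_pos_eq_real_square trace_minus_t_1_pos t_1_minus_t_2_pos noncomm by blast
  have "t 1 \<noteq> t 2"
    using t_1_minus_t_2_pos[OF noncomm] by auto
  then have "complex_of_real (Q\<^sup>2) \<cdot>\<^sub>m (A * B * A - B * A * B) = A - B"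
    by (intro relation_of_trace_identity[OF _ trace_B _ Q identity]) simp_all
  with \<open>Q > 0\<close> Q show ?thesis by blast
qed

end

lemma kron_orthogonal_projection_pair:
  fixes P :: "'a::conjugatable_ordered_field mat"
  assumes P: "P \<in> carrier_mat m m" and idem: "P * P = P" and adjoint: "mat_adjoint P = P"
  shows "orthogonal_projection_pair (m * n) (kron P (1\<^sub>m n)) (kron (1\<^sub>m n) P)"
proof
  have I: "1\<^sub>m n \<in> carrier_mat n n" by simp
  show "kron P (1\<^sub>m n) \<in> carrier_mat (m * n) (m * n)" using P by simp
  show "kron (1\<^sub>m n) P \<in> carrier_mat (m * n) (m * n)" using P kron_carrier_mat[OF I P]
    by (simp add: mult.commute)
  show "kron P (1\<^sub>m n) * kron P (1\<^sub>m n) = kron P (1\<^sub>m n)"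
    using kron_mult[OF P I P I] idem by simp
  show "kron (1\<^sub>m n) P * kron (1\<^sub>m n) P = kron (1\<^sub>m n) P"
    using kron_mult[OF I P I P] idem by simp
  show "mat_adjoint (kron P (1\<^sub>m n)) = kron P (1\<^sub>m n)"
    using mat_adjoint_kron[OF P I] adjoint by simp
  show "mat_adjoint (kron (1\<^sub>m n) P) = kron (1\<^sub>m n) P"
    using mat_adjoint_kron[OF I P] adjoint by simp
qed

theorem proposition1:
  fixes n r :: nat and P :: "complex mat"
  assumes n2: "n \<ge> 2"
    and Pdim: "P \<in> carrier_mat (n^2) (n^2)"
    and Pherm: "mat_adjoint P = P"
    and Pidem: "P * P = P"
    and Prank: "vec_space.rank (n^2) P = r"
  defines "P1 \<equiv> kron P (1\<^sub>m n)"
    and "P2 \<equiv> kron (1\<^sub>m n) P"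
  defines "t \<equiv> (\<lambda>m::nat. mat_trace ((P1 * P2) ^\<^sub>m m))"
  defines "F \<equiv> (of_nat (r * n) - t 1) * (t 2 - t 3) - (t 1 - t 2)^2"
  shows "((\<exists>Q::real. Q > 0 \<and>
             (complex_of_real (Q^2)) \<cdot>\<^sub>m (P1 * P2 * P1 - P2 * P1 * P2) = P1 - P2)
           \<longrightarrow> F = 0)
       \<and> ((F = 0 \<and> P1 * P2 \<noteq> P2 * P1) \<longrightarrow>
           (\<exists>Q::real. Q > 0 \<and>
             complex_of_real (Q^2) = (of_nat (r * n) - t 1) / (t 1 - t 2) \<and>
             (complex_of_real (Q^2)) \<cdot>\<^sub>m (P1 * P2 * P1 - P2 * P1 * P2) = P1 - P2))"
proof -
  interpret PP: complex_projection_pair "n^2 * n" P1 P2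
    unfolding complex_projection_pair_def P1_def P2_def using Pdim Pidem Pherm
    by (rule kron_orthogonal_projection_pair)
  have "mat_trace P = of_nat r"
    using vec_space.idempotent_rank_eq_trace[OF Pdim Pidem] Prank by simp
  then have trace_P1: "mat_trace P1 = of_nat (r * n)" and trace_P2: "mat_trace P2 = mat_trace P1"
    unfolding P1_def P2_def
    using mat_trace_kron[OF Pdim one_carrier_mat] mat_trace_kron[OF one_carrier_mat Pdim]
    by simp_all
  have t: "t = PP.t"
    unfolding t_def PP.t_def ..
  show ?thesis
    unfolding F_def t trace_P1[symmetric]
    using PP.trace_identity_of_relation PP.positive_relation_of_trace_identity[OF trace_P2] by auto
qed

end
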